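(* For $n\ge1$ let $S_n$ be the set of binary sequences of length $n$ in which no maximal run of zeros has length congruent to $1\bmod 3$, and let $c_n=|S_n|$. Then $c_n=c_{n-1}+2c_{n-3}$ for $n\ge4$, with $c_1=1$, $c_2=2$, $c_3=4$.
   Context: A "run of zeros" means a maximal block of consecutive zeros; e.g. $00000\in S_5$ since its only run of zeros has length $5\equiv 2\pmod 3$. *)

theory Defs
  imports Main
begin

definition max_zero_run :: "nat list \<Rightarrow> nat \<Rightarrow> nat \<Rightarrow> bool" where
  "max_zero_run xs i j \<longleftrightarrow>
     i < j \<and> j \<le> length xs \<and> (\<forall>k. i \<le> k \<and> k < j \<longrightarrow> xs ! k = 0) \<and>
     (i = 0 \<or> xs ! (i - 1) \<noteq> 0) \<and> (j = length xs \<or> xs ! j \<noteq> 0)"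

definition S :: "nat \<Rightarrow> nat list set" where
  "S n = {xs. length xs = n \<and> set xs \<subseteq> {0, 1} \<and>
             (\<forall>i j. max_zero_run xs i j \<longrightarrow> (j - i) mod 3 \<noteq> 1)}"

definition c :: "nat \<Rightarrow> nat" where
  "c n = card (S n)"

end

theory Submission
  imports Defs
begin

(* A nonzero entry separates the runs on its two sides, so a word xs @ a # ys with a \<noteq> 0
   is admissible iff xs and ys are; appending three zeros does not change the residue of
   the last run. Hence an admissible word of length n \<ge> 3 never ends in 10, and it ends
   either in 1 (after an admissible word of length n - 1) or in 100 or 000 (after one of
   length n - 3), which gives c n = c (n - 1) + 2 c (n - 3). *)

lemma max_zero_run_le_length: "max_zero_run xs i j \<Longrightarrow> i < j \<and> j \<le> length xs"
  unfolding max_zero_run_def by simp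

lemma max_zero_run_replicate_zero:
  "max_zero_run (replicate k 0) i j \<longleftrightarrow> i = 0 \<and> j = k \<and> 0 < k"
  unfolding max_zero_run_def by (auto simp: le_less)

lemma max_zero_run_append_nonzero_left:
  assumes "a \<noteq> 0" "j \<le> length xs"
  shows "max_zero_run (xs @ a # ys) i j \<longleftrightarrow> max_zero_run xs i j"
  using assms unfolding max_zero_run_def by (auto simp: nth_append)

lemma max_zero_run_append_nonzero_right:
  assumes "a \<noteq> 0"
  shows "max_zero_run (xs @ a # ys) (Suc (length xs) + i) (Suc (length xs) + j) \<longleftrightarrow>
    max_zero_run ys i j"
proof -
  let ?n = "Suc (length xs)" and ?zs = "xs @ a # ys"
  have nth_shift: "?zs ! Suc (length xs + k) = ys ! k" for k
    by (simp add: nth_append)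
  have zeros: "(\<forall>k. ?n + i \<le> k \<and> k < ?n + j \<longrightarrow> ?zs ! k = 0) \<longleftrightarrow>
      (\<forall>k. i \<le> k \<and> k < j \<longrightarrow> ys ! k = 0)"
  proof safe
    fix k assume "\<forall>k. ?n + i \<le> k \<and> k < ?n + j \<longrightarrow> ?zs ! k = 0" "i \<le> k" "k < j"
    then show "ys ! k = 0" using nth_shift[of k] by force
  next
    fix k assume "\<forall>k. i \<le> k \<and> k < j \<longrightarrow> ys ! k = 0" "?n + i \<le> k" "k < ?n + j"
    then obtain m where "k = ?n + m" "i \<le> m" "m < j"
      by (metis add_le_imp_le_left add_less_cancel_left le_add1 le_add_diff_inverse le_trans)
    then show "?zs ! k = 0" using \<open>\<forall>k. i \<le> k \<and> k < j \<longrightarrow> ys ! k = 0\<close> by (simp add: nth_shift)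
  qed
  have left_end: "(?n + i = 0 \<or> ?zs ! (?n + i - 1) \<noteq> 0) \<longleftrightarrow> (i = 0 \<or> ys ! (i - 1) \<noteq> 0)"
    using assms by (cases i) (simp_all add: nth_shift)
  have right_end: "(?n + j = length ?zs \<or> ?zs ! (?n + j) \<noteq> 0) \<longleftrightarrow> (j = length ys \<or> ys ! j \<noteq> 0)"
    by (simp add: nth_shift)
  show ?thesis
    unfolding max_zero_run_def zeros left_end right_end by simp
qed

lemma max_zero_run_append_nonzero_cases:
  assumes "a \<noteq> 0" "max_zero_run (xs @ a # ys) i j"
  shows "j \<le> length xs \<or> length xs < i"
  using assms unfolding max_zero_run_def
  by (metis le_less_linear nth_append_length)

definition admissible :: "nat list \<Rightarrow> bool" where
  "admissible xs \<longleftrightarrow> (\<forall>i j. max_zero_run xs i j \<longrightarrow> (j - i) mod 3 \<noteq> 1)"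

lemma admissible_append_nonzero:
  assumes "a \<noteq> 0"
  shows "admissible (xs @ a # ys) \<longleftrightarrow> admissible xs \<and> admissible ys"
proof (intro iffI conjI)
  let ?n = "Suc (length xs)"
  assume adm: "admissible (xs @ a # ys)"
  show "admissible xs"
    unfolding admissible_def
  proof (intro allI impI)
    fix i j assume "max_zero_run xs i j"
    with assms have "max_zero_run (xs @ a # ys) i j"
      by (simp add: max_zero_run_append_nonzero_left max_zero_run_le_length)
    with adm show "(j - i) mod 3 \<noteq> 1" unfolding admissible_def by blast
  qed
  show "admissible ys"
    unfolding admissible_def
  proof (intro allI impI)
    fix i j assume "max_zero_run ys i j"
    then have "max_zero_run (xs @ a # ys) (?n + i) (?n + j)"
      by (rule max_zero_run_append_nonzero_right[OF assms, THEN iffD2])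
    with adm have "(?n + j - (?n + i)) mod 3 \<noteq> 1" unfolding admissible_def by blast
    then show "(j - i) mod 3 \<noteq> 1" by simp
  qed
next
  let ?n = "Suc (length xs)"
  assume "admissible xs \<and> admissible ys"
  then have adm_xs: "admissible xs" and adm_ys: "admissible ys" by blast+
  show "admissible (xs @ a # ys)"
    unfolding admissible_def
  proof (intro allI impI)
    fix i j assume run: "max_zero_run (xs @ a # ys) i j"
    from assms run have "j \<le> length xs \<or> length xs < i"
      by (rule max_zero_run_append_nonzero_cases)
    then show "(j - i) mod 3 \<noteq> 1"
    proof
      assume "j \<le> length xs"
      with assms run have "max_zero_run xs i j"
        by (simp add: max_zero_run_append_nonzero_left)
      with adm_xs show ?thesis unfolding admissible_def by blast
    next
      assume "length xs < i"
      moreover have "i < j" using run by (rule max_zero_run_le_length[THEN conjunct1])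
      ultimately have ij: "i = ?n + (i - ?n)" "j = ?n + (j - ?n)" by simp_all
      with run have "max_zero_run ys (i - ?n) (j - ?n)"
        by (metis max_zero_run_append_nonzero_right[OF assms])
      moreover have "(j - ?n) - (i - ?n) = j - i" using ij by arith
      ultimately show ?thesis using adm_ys unfolding admissible_def by metis
    qed
  qed
qed

lemma admissible_replicate_zero: "admissible (replicate k 0) \<longleftrightarrow> k mod 3 \<noteq> 1"
  unfolding admissible_def max_zero_run_replicate_zero by auto

lemma last_nonzero_cases:
  obtains (zeros) k where "xs = replicate k (0::nat)"
  | (nonzero) ys a k where "a \<noteq> 0" "xs = ys @ a # replicate k 0"
proof -
  have "(\<exists>k. xs = replicate k 0) \<or> (\<exists>ys a k. a \<noteq> 0 \<and> xs = ys @ a # replicate k 0)"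
  proof (induction xs rule: rev_induct)
    case Nil
    show ?case by (metis replicate_0)
  next
    case (snoc x xs)
    show ?case
    proof (cases "x = 0")
      case True
      with snoc.IH show ?thesis
        by (metis append.assoc append_Cons replicate_Suc replicate_append_same)
    next
      case False
      then show ?thesis by (metis replicate_0)
    qed
  qed
  with that show thesis by blast
qed

lemma admissible_append_zeros: "admissible (xs @ [0, 0, 0]) \<longleftrightarrow> admissible xs"
proof (cases xs rule: last_nonzero_cases)
  case (zeros k)
  then have "xs @ [0, 0, 0] = replicate (k + 3) 0"
    unfolding replicate_add by (simp add: numeral_3_eq_3)
  with zeros show ?thesis by (simp add: admissible_replicate_zero)
next
  case (nonzero ys a k)
  then have "xs @ [0, 0, 0] = ys @ a # replicate (k + 3) 0"
    unfolding replicate_add by (simp add: numeral_3_eq_3)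
  with nonzero show ?thesis by (simp add: admissible_append_nonzero admissible_replicate_zero)
qed

lemma admissible_append_one_zeros:
  "admissible (xs @ 1 # replicate k 0) \<longleftrightarrow> admissible xs \<and> k mod 3 \<noteq> 1"
  by (simp add: admissible_append_nonzero admissible_replicate_zero)

lemma admissible_append_suffix:
  "admissible (xs @ [1]) \<longleftrightarrow> admissible xs"
  "\<not> admissible (xs @ [1, 0])"
  "admissible (xs @ [1, 0, 0]) \<longleftrightarrow> admissible xs"
  "admissible (xs @ [0, 0, 0]) \<longleftrightarrow> admissible xs"
  using admissible_append_one_zeros[of xs 0] admissible_append_one_zeros[of xs 1]
    admissible_append_one_zeros[of xs 2] admissible_append_zeros[of xs]
  by (simp_all add: numeral_2_eq_2)

lemma admissible_short:
  "admissible []" "\<not> admissible [0]" "admissible [1]" "admissible [0, 0]"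
  "\<not> admissible [0, 1]" "\<not> admissible [1, 0]" "admissible [1, 1]"
  using admissible_replicate_zero[of 0] admissible_replicate_zero[of 1]
    admissible_replicate_zero[of 2] admissible_append_suffix(1)[of "[]"]
    admissible_append_suffix(1)[of "[0]"] admissible_append_suffix(2)[of "[]"]
    admissible_append_suffix(1)[of "[1]"]
  by (simp_all add: numeral_2_eq_2)

lemma S_admissible: "S n = {xs. length xs = n \<and> set xs \<subseteq> {0, 1} \<and> admissible xs}"
  unfolding S_def admissible_def by simp

lemma finite_S: "finite (S n)"
proof (rule finite_subset)
  show "S n \<subseteq> {xs. set xs \<subseteq> {0, 1} \<and> length xs = n}" unfolding S_def by auto
  show "finite {xs. set xs \<subseteq> {0::nat, 1} \<and> length xs = n}"
    by (rule finite_lists_length_eq) simp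
qed

lemma S_0: "S 0 = {[]}"
  by (auto simp: S_admissible admissible_short)

lemma S_1: "S 1 = {[1]}"
  using admissible_short by (auto simp: S_admissible length_Suc_conv)

lemma S_2: "S 2 = {[0, 0], [1, 1]}"
  using admissible_short by (auto simp: S_admissible length_Suc_conv numeral_2_eq_2)

lemma append_three_cases:
  assumes "3 \<le> length xs"
  obtains ys a b d where "xs = ys @ [a, b, d]"
proof -
  define zs where "zs = drop (length xs - 3) xs"
  have "length zs = 3" using assms by (simp add: zs_def)
  then obtain a b d where "zs = [a, b, d]"
    by (auto simp: numeral_3_eq_3 length_Suc_conv)
  then have "xs = take (length xs - 3) xs @ [a, b, d]" by (metis append_take_drop_id zs_def)
  then show thesis by (rule that)
qed

lemma S_decompose:
  assumes "3 \<le> n"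
  shows "S n = (\<lambda>ys. ys @ [1]) ` S (n - 1) \<union> (\<lambda>ys. ys @ [0, 0, 0]) ` S (n - 3)
    \<union> (\<lambda>ys. ys @ [1, 0, 0]) ` S (n - 3)"
    (is "S n = ?ones \<union> ?zeros \<union> ?one_zeros")
proof (intro equalityI subsetI)
  fix xs assume "xs \<in> S n"
  then have len: "length xs = n" and bin: "set xs \<subseteq> {0, 1}" and adm: "admissible xs"
    by (simp_all add: S_admissible)
  with assms obtain ys a b d where xs: "xs = ys @ [a, b, d]" by (metis append_three_cases)
  from bin have abd: "a \<in> {0, 1}" "b \<in> {0, 1}" "d \<in> {0, 1}" and ys_bin: "set ys \<subseteq> {0, 1}"
    by (simp_all add: xs)
  from len have ys_len: "length ys = n - 3" by (simp add: xs)
  consider "d = 1" | "b = 1" "d = 0" | "a = 1" "b = 0" "d = 0" | "a = 0" "b = 0" "d = 0"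
    using abd by auto
  then show "xs \<in> ?ones \<union> ?zeros \<union> ?one_zeros"
  proof cases
    case 1
    then have xs_ones: "xs = (ys @ [a, b]) @ [1]" by (simp add: xs)
    with adm have "admissible (ys @ [a, b])" by (simp only: admissible_append_suffix)
    with assms abd ys_bin ys_len have "ys @ [a, b] \<in> S (n - 1)" by (simp add: S_admissible)
    with xs_ones show ?thesis by blast
  next
    case 2
    then have "xs = (ys @ [a]) @ [1, 0]" by (simp add: xs)
    with adm show ?thesis by (simp only: admissible_append_suffix)
  next
    case 3
    then have xs_one_zeros: "xs = ys @ [1, 0, 0]" by (simp add: xs)
    with adm have "admissible ys" by (simp only: admissible_append_suffix)
    with ys_bin ys_len have "ys \<in> S (n - 3)" by (simp add: S_admissible)
    with xs_one_zeros show ?thesis by blast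
  next
    case 4
    then have xs_zeros: "xs = ys @ [0, 0, 0]" by (simp add: xs)
    with adm have "admissible ys" by (simp only: admissible_append_suffix)
    with ys_bin ys_len have "ys \<in> S (n - 3)" by (simp add: S_admissible)
    with xs_zeros show ?thesis by blast
  qed
next
  fix xs assume "xs \<in> ?ones \<union> ?zeros \<union> ?one_zeros"
  then show "xs \<in> S n"
  proof (elim UnE imageE)
    fix ys assume "ys \<in> S (n - 1)" "xs = ys @ [1]"
    with assms admissible_append_suffix(1)[of ys] show ?thesis by (simp add: S_admissible)
  next
    fix ys assume "ys \<in> S (n - 3)" "xs = ys @ [0, 0, 0]"
    with assms admissible_append_suffix(4)[of ys] show ?thesis by (simp add: S_admissible)
  next
    fix ys assume "ys \<in> S (n - 3)" "xs = ys @ [1, 0, 0]"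
    with assms admissible_append_suffix(3)[of ys] show ?thesis by (simp add: S_admissible)
  qed
qed

lemma c_recurrence:
  assumes "3 \<le> n"
  shows "c n = c (n - 1) + 2 * c (n - 3)"
proof -
  let ?ones = "(\<lambda>ys. ys @ [1]) ` S (n - 1)"
  let ?zeros = "(\<lambda>ys. ys @ [0, 0, 0]) ` S (n - 3)"
  let ?one_zeros = "(\<lambda>ys. ys @ [1, 0, 0]) ` S (n - 3)"
  have card_images: "card ?ones = c (n - 1)" "card ?zeros = c (n - 3)" "card ?one_zeros = c (n - 3)"
    unfolding c_def by (simp_all add: card_image inj_on_def)
  have "?zeros \<inter> ?one_zeros = {}"
    by (auto simp: S_def)
  moreover have "?ones \<inter> (?zeros \<union> ?one_zeros) = {}"
    by auto
  ultimately have "card (?ones \<union> (?zeros \<union> ?one_zeros)) = card ?ones + (card ?zeros + card ?one_zeros)"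
    by (simp add: finite_S card_Un_disjoint)
  then show ?thesis
    using S_decompose[OF assms] card_images by (simp add: c_def Un_assoc)
qed

theorem theorem4:
  shows "(\<forall>n\<ge>4. c n = c (n - 1) + 2 * c (n - 3)) \<and> c 1 = 1 \<and> c 2 = 2 \<and> c 3 = 4"
proof -
  have "c 0 = 1" "c 1 = 1" "c 2 = 2"
    unfolding c_def S_0 S_1 S_2 by simp_all
  moreover from this have "c 3 = 4"
    using c_recurrence[of 3] by simp
  ultimately show ?thesis
    using c_recurrence by simp
qed

end
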